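(* The pair $(\ell_2^2, C[0,1])$ fails the uniform sBPBp.
   Context: Scalars $\mathbb{K}=\mathbb{R}$ or $\mathbb{C}$; $\ell_2^2$ is $\mathbb{K}^2$ with the Euclidean norm; $C[0,1]$ is the space of continuous $\mathbb{K}$-valued functions on $[0,1]$ with the sup norm; $S_X$ is the unit sphere of $X$ and $\mathcal{L}(X,Y)$ the bounded linear operators. A pair of Banach spaces $(X,Y)$ has the uniform strong Bishop–Phelps–Bollobás property (uniform sBPBp) if for every $\varepsilon>0$ there exists $\eta(\varepsilon)>0$ such that whenever $T\in\mathcal{L}(X,Y)$ with $\|T\|=1$ and $x_0\in S_X$ satisfy $\|T(x_0)\|>1-\eta(\varepsilon)$, there exists $x_1\in S_X$ with $\|T(x_1)\|=1$ and $\|x_1-x_0\|<\varepsilon$. *)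

theory Defs
  imports "HOL-Analysis.Analysis"
begin

text \<open>The space ell_2^2 over the scalar field 'k is the type 'k^2 (its library norm is the
Euclidean norm).  An element of C[0,1] is represented by a function real => 'k that is continuous
on [0,1]; its norm is the sup norm over [0,1].\<close>

definition sup_norm01 :: "(real \<Rightarrow> 'k::real_normed_field) \<Rightarrow> real" where
  "sup_norm01 g = (SUP t\<in>{0..1::real}. norm (g t))"

definition is_op_l22_C01 :: "('k::real_normed_field ^ 2 \<Rightarrow> (real \<Rightarrow> 'k)) \<Rightarrow> bool" where
  "is_op_l22_C01 T \<longleftrightarrow>
     (\<forall>x. continuous_on {0..1} (T x)) \<and>
     (\<forall>x y. T (x + y) = (\<lambda>t. T x t + T y t)) \<and>
     (\<forall>(c::'k) x. T (c *s x) = (\<lambda>t. c * T x t)) \<and>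
     (\<exists>K. \<forall>x. sup_norm01 (T x) \<le> K * norm x)"

definition op_norm_l22_C01 :: "('k::real_normed_field ^ 2 \<Rightarrow> (real \<Rightarrow> 'k)) \<Rightarrow> real" where
  "op_norm_l22_C01 T = (SUP x\<in>{x. norm x \<le> 1}. sup_norm01 (T x))"

definition uniform_sBPBp_l22_C01 :: "'k::real_normed_field itself \<Rightarrow> bool" where
  "uniform_sBPBp_l22_C01 (_ :: 'k itself) \<longleftrightarrow>
     (\<forall>\<epsilon>>0. \<exists>\<eta>>0. \<forall>(T :: 'k ^ 2 \<Rightarrow> (real \<Rightarrow> 'k)) (x0 :: 'k ^ 2).
        is_op_l22_C01 T \<and> op_norm_l22_C01 T = 1 \<and> norm x0 = 1 \<and>
        sup_norm01 (T x0) > 1 - \<eta> \<longrightarrow>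
        (\<exists>x1 :: 'k ^ 2. norm x1 = 1 \<and> sup_norm01 (T x1) = 1 \<and> norm (x1 - x0) < \<epsilon>))"

end

theory Submission
  imports Defs
begin

text \<open>For \<open>0 < d \<le> 1\<close> the operator \<open>T\<^sub>d x (t) = (1 - d)(1 - t) x\<^sub>1 + t x\<^sub>2\<close> has norm one, and
  \<open>T\<^sub>d e\<^sub>1\<close> has norm \<open>1 - d\<close>, which is as close to one as we like. But \<open>|T\<^sub>d x (t)|\<close> is bounded
  by a convex combination of \<open>(1 - d)|x\<^sub>1|\<close> and \<open>|x\<^sub>2|\<close>, so a unit vector \<open>x\<close> can only attain the
  norm if \<open>|x\<^sub>2| = 1\<close>, and every such \<open>x\<close> lies at distance at least one from \<open>e\<^sub>1\<close>.\<close>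

lemma sup_norm01_le:
  assumes "\<And>t. t \<in> {0..1} \<Longrightarrow> norm (g t) \<le> M"
  shows "sup_norm01 g \<le> M"
  unfolding sup_norm01_def using assms by (intro cSUP_least) auto

lemma norm_le_sup_norm01:
  assumes "\<And>t. t \<in> {0..1} \<Longrightarrow> norm (g t) \<le> M" and "s \<in> {0..1}"
  shows "norm (g s) \<le> sup_norm01 g"
  unfolding sup_norm01_def using assms by (intro cSUP_upper) (auto intro!: bdd_aboveI2[where M = M])

lemma norm_axis: "norm (axis i x) = norm x"
proof -
  have "(\<Sum>j\<in>UNIV. (norm (axis i x $ j))\<^sup>2) = (norm x)\<^sup>2"
    by (simp add: axis_def if_distrib[of "\<lambda>y. (norm y)\<^sup>2"] sum.If_cases)
  then show ?thesis
    unfolding norm_vec_def L2_set_def by simp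
qed

definition tilted_op :: "real \<Rightarrow> 'k::real_normed_field ^ 2 \<Rightarrow> real \<Rightarrow> 'k" where
  "tilted_op d x = (\<lambda>t. of_real ((1 - d) * (1 - t)) * x$1 + of_real t * x$2)"

lemma norm_tilted_op_le_max:
  assumes "0 \<le> d" "d \<le> 1" "t \<in> {0..1}"
  shows "norm (tilted_op d x t) \<le> max ((1 - d) * norm (x$1)) (norm (x$2))"
proof -
  have "norm (tilted_op d x t) \<le> norm (of_real ((1 - d) * (1 - t)) * x$1) + norm (of_real t * x$2)"
    unfolding tilted_op_def by (rule norm_triangle_ineq)
  also have "\<dots> = (1 - t) * ((1 - d) * norm (x$1)) + t * norm (x$2)"
    using assms unfolding norm_mult norm_of_real by simp
  also have "\<dots> \<le> max ((1 - d) * norm (x$1)) (norm (x$2))"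
    using assms by (intro convex_bound_le) auto
  finally show ?thesis .
qed

lemma norm_tilted_op_le_norm:
  assumes "0 \<le> d" "d \<le> 1" "t \<in> {0..1}"
  shows "norm (tilted_op d x t) \<le> norm x"
proof -
  have "(1 - d) * norm (x$1) \<le> norm (x$1)"
    using assms by (intro mult_left_le_one_le) auto
  also have "\<dots> \<le> norm x"
    by (rule Finite_Cartesian_Product.norm_nth_le)
  finally have "(1 - d) * norm (x$1) \<le> norm x" .
  then show ?thesis
    using norm_tilted_op_le_max[OF assms, of x] Finite_Cartesian_Product.norm_nth_le[of x 2] by linarith
qed

lemma is_op_tilted_op:
  assumes "0 \<le> d" "d \<le> 1"
  shows "is_op_l22_C01 (tilted_op d :: 'k::real_normed_field ^ 2 \<Rightarrow> real \<Rightarrow> 'k)"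
  unfolding is_op_l22_C01_def
proof (intro conjI allI exI)
  fix x :: "'k ^ 2"
  show "continuous_on {0..1} (tilted_op d x)"
    unfolding tilted_op_def by (intro continuous_intros)
  show "sup_norm01 (tilted_op d x) \<le> 1 * norm x"
    using norm_tilted_op_le_norm[OF assms, of _ x] by (auto intro!: sup_norm01_le)
  fix y :: "'k ^ 2"
  show "tilted_op d (x + y) = (\<lambda>t. tilted_op d x t + tilted_op d y t)"
    unfolding tilted_op_def by (auto simp: algebra_simps)
next
  fix c :: 'k and x :: "'k ^ 2"
  show "tilted_op d (c *s x) = (\<lambda>t. c * tilted_op d x t)"
    unfolding tilted_op_def by (auto simp: algebra_simps)
qed

lemma op_norm_tilted_op:
  assumes "0 \<le> d" "d \<le> 1"
  shows "op_norm_l22_C01 (tilted_op d :: 'k::real_normed_field ^ 2 \<Rightarrow> real \<Rightarrow> 'k) = 1"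
proof -
  have bound: "sup_norm01 (tilted_op d x) \<le> 1" if "norm x \<le> 1" for x :: "'k ^ 2"
    using norm_tilted_op_le_norm[OF assms, of _ x] that by (force intro: sup_norm01_le)
  let ?e2 = "axis 2 1 :: 'k ^ 2"
  have "tilted_op d ?e2 1 = 1"
    unfolding tilted_op_def by (simp add: axis_def)
  then have "1 \<le> sup_norm01 (tilted_op d ?e2)"
    using norm_le_sup_norm01[of "tilted_op d ?e2" 1 1] norm_tilted_op_le_norm[OF assms, of _ ?e2]
    by (simp add: norm_axis)
  also have "\<dots> \<le> op_norm_l22_C01 (tilted_op d :: 'k ^ 2 \<Rightarrow> real \<Rightarrow> 'k)"
    unfolding op_norm_l22_C01_def
    by (rule cSUP_upper) (use bound in \<open>auto simp: norm_axis intro!: bdd_aboveI2\<close>)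
  finally show ?thesis
    unfolding op_norm_l22_C01_def using bound
    by (intro antisym cSUP_least) (auto intro: exI[of _ 0])
qed

lemma sup_norm01_tilted_op_axis1:
  assumes "0 \<le> d" "d \<le> 1"
  shows "1 - d \<le> sup_norm01 (tilted_op d (axis 1 1 :: 'k::real_normed_field ^ 2))"
proof -
  have "tilted_op d (axis 1 1 :: 'k ^ 2) 0 = of_real (1 - d)"
    unfolding tilted_op_def by (simp add: axis_def)
  then have "norm (tilted_op d (axis 1 1 :: 'k ^ 2) 0) = 1 - d"
    using assms by (simp only: norm_of_real)
  moreover have "norm (tilted_op d (axis 1 1 :: 'k ^ 2) 0) \<le> sup_norm01 (tilted_op d (axis 1 1 :: 'k ^ 2))"
    using norm_tilted_op_le_norm[OF assms, of _ "axis 1 1 :: 'k ^ 2"]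
    by (intro norm_le_sup_norm01[where M = 1]) (auto simp: norm_axis)
  ultimately show ?thesis
    by simp
qed

lemma tilted_op_norm_attained_far_from_axis1:
  fixes x :: "'k::real_normed_field ^ 2"
  assumes "0 < d" "d \<le> 1" "norm x = 1" "sup_norm01 (tilted_op d x) = 1"
  shows "1 \<le> norm (x - axis 1 1)"
proof -
  have "(1 - d) * norm (x$1) \<le> 1 - d"
    using assms Finite_Cartesian_Product.norm_nth_le[of x 1] by (intro mult_left_le) auto
  then have "(1 - d) * norm (x$1) < 1"
    using assms by linarith
  moreover have "sup_norm01 (tilted_op d x) \<le> max ((1 - d) * norm (x$1)) (norm (x$2))"
    using assms norm_tilted_op_le_max[of d _ x] by (intro sup_norm01_le) auto
  ultimately have "1 \<le> norm (x$2)"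
    using assms by linarith
  also have "x$2 = (x - axis 1 1)$2"
    by (simp add: axis_def)
  finally show ?thesis
    using Finite_Cartesian_Product.norm_nth_le order_trans by blast
qed

lemma not_uniform_sBPBp_l22_C01: "\<not> uniform_sBPBp_l22_C01 TYPE('k::real_normed_field)"
proof
  assume "uniform_sBPBp_l22_C01 TYPE('k)"
  then obtain \<eta> where "\<eta> > 0" and sBPBp: "\<And>(T :: 'k ^ 2 \<Rightarrow> real \<Rightarrow> 'k) x0.
      is_op_l22_C01 T \<and> op_norm_l22_C01 T = 1 \<and> norm x0 = 1 \<and> sup_norm01 (T x0) > 1 - \<eta> \<Longrightarrow>
      \<exists>x1. norm x1 = 1 \<and> sup_norm01 (T x1) = 1 \<and> norm (x1 - x0) < 1"
    unfolding uniform_sBPBp_l22_C01_def by (metis zero_less_one)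
  define d where "d = min (\<eta> / 2) 1"
  have d: "0 < d" "d \<le> 1" "d < \<eta>"
    using \<open>\<eta> > 0\<close> by (auto simp: d_def)
  then have "sup_norm01 (tilted_op d (axis 1 1 :: 'k ^ 2)) > 1 - \<eta>"
    using sup_norm01_tilted_op_axis1[of d, where 'k = 'k] by fastforce
  then obtain x1 :: "'k ^ 2" where
    "norm x1 = 1" "sup_norm01 (tilted_op d x1) = 1" "norm (x1 - axis 1 1) < 1"
    using sBPBp[of "tilted_op d" "axis 1 1"] d is_op_tilted_op[of d, where 'k = 'k]
      op_norm_tilted_op[of d, where 'k = 'k]
    by (auto simp: norm_axis)
  then show False
    using tilted_op_norm_attained_far_from_axis1[of d x1] d by linarith
qed

theorem mainTheorem13:
  shows "\<not> uniform_sBPBp_l22_C01 TYPE(real) \<and> \<not> uniform_sBPBp_l22_C01 TYPE(complex)"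
  using not_uniform_sBPBp_l22_C01[where 'k = real] not_uniform_sBPBp_l22_C01[where 'k = complex]
  by blast

end
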